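(* Let $T \subseteq \mathbb{Z}_2^\omega$ be a thin set such that $T\cap X\neq\emptyset$ for every equivalence class $X$ of the relation $\sim$ on $\mathbb{Z}_2^\omega$. Then $T$ is not a Borel subset of $\mathbb{Z}_2^\omega$.
   Context: $\mathbb{Z}_2^\omega$ is the Cantor cube of infinite binary sequences indexed by $\omega=\{0,1,2,\dots\}$, with the product (Tychonoff) topology. The Hamming distance is $\mathrm{hd}(x,y)=|\{k: x(k)\ne y(k)\}|\in\omega\cup\{\omega\}$, and $x\sim y$ iff $\mathrm{hd}(x,y)$ is finite. A set $T\subseteq\mathbb{Z}_2^\omega$ is thin if for every $n\in\omega$ the map $x\mapsto x|_{\omega\setminus\{n\}}$ is injective on $T$ (equivalently, no two distinct elements of $T$ differ in exactly one coordinate). *)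

theory Defs
  imports "HOL-Analysis.Analysis"
begin

text \<open>Cantor cube: the type nat \<Rightarrow> bool (bool with its discrete topology,
  the function space with the product topology from Function_Topology).\<close>

definition hamming_equiv :: "(nat \<Rightarrow> bool) \<Rightarrow> (nat \<Rightarrow> bool) \<Rightarrow> bool" where
  "hamming_equiv x y \<longleftrightarrow> finite {k. x k \<noteq> y k}"

definition hamming_rel :: "((nat \<Rightarrow> bool) \<times> (nat \<Rightarrow> bool)) set" where
  "hamming_rel = {(x, y). hamming_equiv x y}"

definition thin :: "(nat \<Rightarrow> bool) set \<Rightarrow> bool" where
  "thin T \<longleftrightarrow> (\<forall>n. inj_on (\<lambda>x. restrict x (UNIV - {n})) T)"

end

theory Submission
  imports Defs
begin

text \<open>A Borel set T has the Baire property: it differs from some open set U by a meager set.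
  Toggling a single coordinate n is a homeomorphism of the Cantor cube which, by thinness, maps T
  off itself; for x in U and n outside the finitely many coordinates constrained by a basic
  neighbourhood of x, it also keeps x inside U. So a nonempty open part of U would be covered by
  two meager sets, hence U is empty and T is meager. But as T meets every Hamming class, its
  countably many images under toggling finite sets of coordinates cover the cube, contradicting
  the Baire category theorem.\<close>

definition meager :: "'a::topological_space set \<Rightarrow> bool" where
  "meager A \<longleftrightarrow> (\<exists>\<C>. countable \<C> \<and> (\<forall>C\<in>\<C>. closed C \<and> interior C = {}) \<and> A \<subseteq> \<Union>\<C>)"

definition baire_property :: "'a::topological_space set \<Rightarrow> bool" where
  "baire_property A \<longleftrightarrow> (\<exists>U. open U \<and> meager (sym_diff A U))"

lemma meager_subset: "meager B \<Longrightarrow> A \<subseteq> B \<Longrightarrow> meager A"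
  unfolding meager_def by (meson subset_trans)

lemma meager_empty [simp]: "meager {}"
  unfolding meager_def by (intro exI[of _ "{}"]) simp

lemma meager_countable_UN:
  assumes "countable I" and "\<And>i. i \<in> I \<Longrightarrow> meager (A i)"
  shows "meager (\<Union>i\<in>I. A i)"
proof -
  obtain \<C> where \<C>: "\<And>i. i \<in> I \<Longrightarrow>
      countable (\<C> i) \<and> (\<forall>C\<in>\<C> i. closed C \<and> interior C = {}) \<and> A i \<subseteq> \<Union>(\<C> i)"
    using assms(2) unfolding meager_def by metis
  show ?thesis
    unfolding meager_def
    by (intro exI[of _ "\<Union>i\<in>I. \<C> i"]) (use assms(1) \<C> in fastforce)
qed

lemma meager_Un: "meager A \<Longrightarrow> meager B \<Longrightarrow> meager (A \<union> B)"
  using meager_countable_UN[of "{A, B}" id] by auto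

lemma meager_frontier_open:
  assumes "open U"
  shows "meager (frontier U)"
proof -
  have "interior (frontier U) \<inter> U = {}"
    using assms frontier_disjoint_eq interior_subset by blast
  then have "interior (frontier U) \<inter> closure U = {}"
    by (simp add: open_Int_closure_eq_empty)
  then have "interior (frontier U) = {}"
    using interior_subset[of "frontier U"] by (auto simp: frontier_def)
  then show ?thesis
    unfolding meager_def by (intro exI[of _ "{frontier U}"]) simp
qed

lemma borel_baire_property:
  assumes "A \<in> sets borel"
  shows "baire_property A"
proof -
  have "A \<in> sigma_sets UNIV {S. open S}"
    using assms by (simp add: sets_borel)
  then show ?thesis
  proof induction
    case (Basic A)
    then show ?case
      unfolding baire_property_def by (intro exI[of _ A]) simp
  next
    case Empty
    then show ?case
      unfolding baire_property_def by (intro exI[of _ "{}"]) simp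
  next
    case (Compl A)
    then obtain U where U: "open U" "meager (sym_diff A U)"
      unfolding baire_property_def by blast
    have "sym_diff (UNIV - A) (- closure U) \<subseteq> sym_diff A U \<union> frontier U"
      using closure_subset[of U] U(1) by (auto simp: frontier_def interior_open)
    moreover have "meager (sym_diff A U \<union> frontier U)"
      using U meager_Un meager_frontier_open by blast
    ultimately show ?case
      unfolding baire_property_def by (meson open_Compl closed_closure meager_subset)
  next
    case (Union A)
    then obtain U where U: "\<And>i. open (U i)" "\<And>i. meager (sym_diff (A i) (U i))"
      unfolding baire_property_def by metis
    have "sym_diff (\<Union>(range A)) (\<Union>(range U)) \<subseteq> (\<Union>i. sym_diff (A i) (U i))"
      by blast
    moreover have "meager (\<Union>i. sym_diff (A i) (U i))"
      by (rule meager_countable_UN) (simp_all add: U)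
    ultimately show ?case
      unfolding baire_property_def by (meson U(1) open_UN meager_subset)
  qed
qed

lemma meager_homeomorphic_image:
  assumes "homeomorphic_map euclidean euclidean f" and "meager A"
  shows "meager (f ` A)"
proof -
  obtain \<C> where \<C>: "countable \<C>" "\<And>C. C \<in> \<C> \<Longrightarrow> closed C \<and> interior C = {}" "A \<subseteq> \<Union>\<C>"
    using assms(2) unfolding meager_def by blast
  have "closed (f ` C)" if "C \<in> \<C>" for C
    using homeomorphic_map_closedness[OF assms(1), of C] \<C>(2)[OF that] by simp
  moreover have "interior (f ` C) = {}" if "C \<in> \<C>" for C
    using homeomorphic_map_interior_of[OF assms(1), of C] \<C>(2)[OF that] by simp
  moreover have "f ` A \<subseteq> \<Union>((`) f ` \<C>)"
    using \<C>(3) by blast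
  ultimately show ?thesis
    unfolding meager_def using \<C>(1) by (intro exI[of _ "(`) f ` \<C>"]) auto
qed

lemma not_meager_open:
  fixes U :: "'a::topological_space set"
  assumes "completely_metrizable_space (euclidean :: 'a topology)
      \<or> locally_compact_space (euclidean :: 'a topology) \<and> regular_space (euclidean :: 'a topology)"
    and "open U" and "U \<noteq> {}"
  shows "\<not> meager U"
proof
  assume "meager U"
  then obtain \<C> where \<C>: "countable \<C>" "\<And>C. C \<in> \<C> \<Longrightarrow> closed C \<and> interior C = {}" "U \<subseteq> \<Union>\<C>"
    unfolding meager_def by blast
  have "interior (\<Union>\<C>) = {}"
    using Baire_category_alt[OF assms(1) \<C>(1)] \<C>(2) by simp
  moreover have "U \<subseteq> interior (\<Union>\<C>)"
    using \<C>(3) assms(2) interior_maximal by blast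
  ultimately show False
    using assms(3) by blast
qed

lemma locally_compact_regular_Cantor_cube:
  "locally_compact_space (euclidean :: ('a \<Rightarrow> bool) topology)
    \<and> regular_space (euclidean :: ('a \<Rightarrow> bool) topology)"
proof -
  have "compact_space (euclidean :: bool topology)"
    by (simp add: compact_space_def finite_imp_compact compactin_euclidean_iff)
  then have "compact_space (euclidean :: ('a \<Rightarrow> bool) topology)"
    by (metis compact_space_product_topology euclidean_product_topology)
  moreover have "Hausdorff_space (euclidean :: bool topology)"
    unfolding Hausdorff_space_def by (metis open_openin separation_t2 disjnt_def)
  then have "Hausdorff_space (euclidean :: ('a \<Rightarrow> bool) topology)"
    by (metis Hausdorff_space_product_topology euclidean_product_topology)
  ultimately show ?thesis
    by (simp add: compact_imp_locally_compact_space compact_Hausdorff_imp_regular_space)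
qed

lemma not_meager_open_Cantor_cube:
  fixes U :: "('a \<Rightarrow> bool) set"
  assumes "open U" and "U \<noteq> {}"
  shows "\<not> meager U"
  using not_meager_open[OF disjI2[OF locally_compact_regular_Cantor_cube] assms] .

definition toggle :: "'a set \<Rightarrow> ('a \<Rightarrow> bool) \<Rightarrow> ('a \<Rightarrow> bool)" where
  "toggle F x = (\<lambda>k. if k \<in> F then \<not> x k else x k)"

lemma toggle_toggle [simp]: "toggle F (toggle F x) = x"
  by (simp add: toggle_def)

lemma continuous_on_toggle: "continuous_on UNIV (toggle F)"
  unfolding toggle_def
proof (intro continuous_on_coordinatewise_then_product)
  fix k
  have "continuous_on UNIV (\<lambda>b::bool. if k \<in> F then \<not> b else b)"
    by (simp add: continuous_on_open_vimage open_discrete)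
  then show "continuous_on UNIV (\<lambda>x. if k \<in> F then \<not> x k else x k)"
    by (rule continuous_on_compose2[OF _ continuous_on_product_coordinates]) simp
qed

lemma homeomorphic_map_toggle: "homeomorphic_map euclidean euclidean (toggle F)"
  by (rule homeomorphic_map_involution) (simp_all add: continuous_on_toggle)

lemma open_toggle_single:
  fixes U :: "('a \<Rightarrow> bool) set"
  assumes "infinite (UNIV :: 'a set)" and "open U" and "x \<in> U"
  obtains n where "toggle {n} x \<in> U"
proof -
  have "openin (product_topology (\<lambda>i. euclidean) UNIV) U"
    using assms(2) by (simp add: euclidean_product_topology)
  then obtain V where V: "finite {i. V i \<noteq> UNIV}" "x \<in> Pi\<^sub>E UNIV V" "Pi\<^sub>E UNIV V \<subseteq> U"
    using assms(3) unfolding openin_product_topology_alt by simp meson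
  obtain n where "V n = UNIV"
    using ex_new_if_finite[OF assms(1) V(1)] by blast
  then have "toggle {n} x \<in> Pi\<^sub>E UNIV V"
    using V(2) by (simp add: toggle_def PiE_iff)
  then show thesis
    using V(3) that by blast
qed

lemma thin_toggle_single:
  assumes "thin T" and "z \<in> T"
  shows "toggle {n} z \<notin> T"
proof
  assume "toggle {n} z \<in> T"
  moreover have "restrict (toggle {n} z) (UNIV - {n}) = restrict z (UNIV - {n})"
    by (simp add: restrict_def toggle_def)
  ultimately have "toggle {n} z = z"
    using assms unfolding thin_def inj_on_def by blast
  then have "toggle {n} z n = z n"
    by simp
  then show False
    by (simp add: toggle_def)
qed

lemma UN_toggle_finite_eq_UNIV:
  assumes "\<forall>X \<in> UNIV // hamming_rel. T \<inter> X \<noteq> {}"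
  shows "(\<Union>F\<in>{F. finite F}. toggle F ` T) = UNIV"
proof -
  have "x \<in> (\<Union>F\<in>{F. finite F}. toggle F ` T)" for x
  proof -
    have "hamming_rel `` {x} \<in> UNIV // hamming_rel"
      by (rule quotientI) simp
    then obtain t where "t \<in> T" and "(x, t) \<in> hamming_rel"
      using assms by blast
    then have "finite {k. x k \<noteq> t k}"
      by (simp add: hamming_rel_def hamming_equiv_def)
    moreover have "x = toggle {k. x k \<noteq> t k} t"
      by (auto simp: toggle_def)
    ultimately show ?thesis
      using \<open>t \<in> T\<close> by blast
  qed
  then show ?thesis
    by blast
qed

lemma thin_meager_sym_diff_open_imp_empty:
  assumes "thin T" and "open U" and "meager (sym_diff T U)"
  shows "U = {}"
proof (rule ccontr)
  assume "U \<noteq> {}"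
  then obtain x where "x \<in> U"
    by blast
  then obtain n where "toggle {n} x \<in> U"
    using open_toggle_single[OF infinite_UNIV_nat assms(2)] by blast
  define Z where "Z = U \<inter> toggle {n} -` U"
  have "open Z"
    unfolding Z_def by (intro open_Int assms(2) open_vimage[OF _ continuous_on_toggle])
  moreover have "Z \<noteq> {}"
    using \<open>x \<in> U\<close> \<open>toggle {n} x \<in> U\<close> by (auto simp: Z_def)
  moreover have "Z \<subseteq> (U - T) \<union> toggle {n} ` (U - T)"
  proof
    fix z assume "z \<in> Z"
    show "z \<in> (U - T) \<union> toggle {n} ` (U - T)"
    proof (cases "z \<in> T")
      case True
      then have "toggle {n} z \<in> U - T"
        using \<open>z \<in> Z\<close> thin_toggle_single[OF assms(1)] by (simp add: Z_def)
      then show ?thesis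
        by (metis UnI2 image_eqI toggle_toggle)
    next
      case False
      then show ?thesis
        using \<open>z \<in> Z\<close> by (simp add: Z_def)
    qed
  qed
  moreover have "meager ((U - T) \<union> toggle {n} ` (U - T))"
    using meager_subset[OF assms(3), of "U - T"]
    by (intro meager_Un meager_homeomorphic_image[OF homeomorphic_map_toggle]) auto
  ultimately show False
    using not_meager_open_Cantor_cube meager_subset by blast
qed

lemma not_meager_if_meets_all_hamming_classes:
  fixes T :: "(nat \<Rightarrow> bool) set"
  assumes "\<forall>X \<in> UNIV // hamming_rel. T \<inter> X \<noteq> {}"
  shows "\<not> meager T"
proof
  assume "meager T"
  then have "meager (\<Union>F\<in>{F. finite F}. toggle F ` T)"
    by (intro meager_countable_UN countable_Collect_finite
        meager_homeomorphic_image[OF homeomorphic_map_toggle])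
  then show False
    using not_meager_open_Cantor_cube[of "UNIV :: (nat \<Rightarrow> bool) set"]
    by (simp add: UN_toggle_finite_eq_UNIV[OF assms])
qed

theorem theorem9:
  fixes T :: "(nat \<Rightarrow> bool) set"
  assumes "thin T"
    and "\<forall>X \<in> UNIV // hamming_rel. T \<inter> X \<noteq> {}"
  shows "T \<notin> sets borel"
proof
  assume "T \<in> sets borel"
  then obtain U where "open U" and "meager (sym_diff T U)"
    using borel_baire_property baire_property_def by blast
  moreover from this have "U = {}"
    using thin_meager_sym_diff_open_imp_empty[OF assms(1)] by blast
  ultimately have "meager T"
    by simp
  then show False
    using not_meager_if_meets_all_hamming_classes[OF assms(2)] by blast
qed

end
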